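(* For every $\delta>0$ and every integer $m\ge2$ there exists a scheduling game on $m$ identical machines of speed $1$, in which every job $i$ has processing-time function $p_i(t)=\max\{b_i-a_it,\tau\}$ with $b_i\ge0$, $0\le a_i\le1$, common threshold $\tau>0$, and all machines use the SDR global priority list (non-decreasing order of $a_i$, ties broken arbitrarily), whose price of anarchy is at least $2-\delta$. Hence the bound $2$ for SDR is tight for every $m\ge2$.
   Context: Scheduling game: a finite set $N$ of $n$ jobs (players) and a set $M$ of $m$ machines; machine $j$ has speed $s_j>0$. With a global priority list, all machines share the same bijection $\pi:N\to\{1,\dots,n\}$, and job $u$ has higher priority than $v$ iff $\pi(u)<\pi(v)$. A profile $\sigma\in M^N$ assigns each job to a machine. On machine $j$, the jobs assigned to it, listed in increasing $\pi$-order as $i_1,i_2,\dots$, are processed without idle time: $S_{i_1}(\sigma)=0$, $C_{i_k}(\sigma)=S_{i_k}(\sigma)+p_{i_k}(S_{i_k}(\sigma))/s_j$, $S_{i_{k+1}}(\sigma)=C_{i_k}(\sigma)$. The cost of job $i$ is $C_i(\sigma)$. A pure Nash equilibrium (NE) is a profile in which no job can strictly decrease its completion time by unilaterally changing its machine. Makespan $C_{\max}(\sigma)=\max_iC_i(\sigma)$; $OPT(G)=\min_\sigma C_{\max}(\sigma)$; $PoA(G)=\max_{\sigma\text{ NE}}C_{\max}(\sigma)/OPT(G)$. *)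

theory Defs
  imports Main "HOL.Real"
begin

text \<open>The global priority list is a list prio that is
  a permutation of [0..<n] (earlier in the list = higher priority).
  p k t is the processing time of job k when started at time t, s j the speed of machine j.\<close>

fun seq_completion :: "(nat \<Rightarrow> real \<Rightarrow> real) \<Rightarrow> real \<Rightarrow> nat list \<Rightarrow> real \<Rightarrow> nat \<Rightarrow> real" where
  "seq_completion p sp [] t i = 0"
| "seq_completion p sp (k # ks) t i =
     (let c = t + p k t / sp in if i = k then c else seq_completion p sp ks c i)"

definition completion ::
  "(nat \<Rightarrow> real \<Rightarrow> real) \<Rightarrow> (nat \<Rightarrow> real) \<Rightarrow> nat list \<Rightarrow> (nat \<Rightarrow> nat) \<Rightarrow> nat \<Rightarrow> real" where
  "completion p s prio \<sigma> i =
     seq_completion p (s (\<sigma> i)) (filter (\<lambda>k. \<sigma> k = \<sigma> i) prio) 0 i"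

definition valid_profile :: "nat \<Rightarrow> nat \<Rightarrow> (nat \<Rightarrow> nat) \<Rightarrow> bool" where
  "valid_profile n m \<sigma> \<longleftrightarrow> (\<forall>i<n. \<sigma> i < m)"

definition is_NE ::
  "nat \<Rightarrow> nat \<Rightarrow> (nat \<Rightarrow> real \<Rightarrow> real) \<Rightarrow> (nat \<Rightarrow> real) \<Rightarrow> nat list \<Rightarrow> (nat \<Rightarrow> nat) \<Rightarrow> bool" where
  "is_NE n m p s prio \<sigma> \<longleftrightarrow> valid_profile n m \<sigma> \<and>
     (\<forall>i<n. \<forall>j<m. completion p s prio \<sigma> i \<le> completion p s prio (\<sigma>(i := j)) i)"

definition makespan ::
  "nat \<Rightarrow> (nat \<Rightarrow> real \<Rightarrow> real) \<Rightarrow> (nat \<Rightarrow> real) \<Rightarrow> nat list \<Rightarrow> (nat \<Rightarrow> nat) \<Rightarrow> real" where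
  "makespan n p s prio \<sigma> = Max (insert 0 (completion p s prio \<sigma> ` {..<n}))"

definition OPT ::
  "nat \<Rightarrow> nat \<Rightarrow> (nat \<Rightarrow> real \<Rightarrow> real) \<Rightarrow> (nat \<Rightarrow> real) \<Rightarrow> nat list \<Rightarrow> real" where
  "OPT n m p s prio = Inf {makespan n p s prio \<sigma> | \<sigma>. valid_profile n m \<sigma>}"

definition PoA ::
  "nat \<Rightarrow> nat \<Rightarrow> (nat \<Rightarrow> real \<Rightarrow> real) \<Rightarrow> (nat \<Rightarrow> real) \<Rightarrow> nat list \<Rightarrow> real" where
  "PoA n m p s prio =
     Sup {makespan n p s prio \<sigma> / OPT n m p s prio | \<sigma>. is_NE n m p s prio \<sigma>}"

definition SDR_list :: "nat \<Rightarrow> (nat \<Rightarrow> real) \<Rightarrow> nat list \<Rightarrow> bool" where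
  "SDR_list n a prio \<longleftrightarrow> distinct prio \<and> set prio = {..<n} \<and> sorted (map a prio)"

end

theory Submission
  imports Defs
begin

text \<open>All jobs get the same slope \<open>\<epsilon>\<close>, so any order of the jobs is an SDR list.
  There are \<open>m K\<close> short jobs (\<open>b = \<epsilon>\<close>), followed in the list by one long job
  (\<open>b = 1\<close>), and the threshold \<open>\<tau>\<close> is so small that \<open>(m K + 1) \<tau> \<le> \<epsilon>\<close>.
  Since the processing time \<open>max (\<epsilon> (1 - t)) \<tau>\<close> of a short job shrinks as its start
  time approaches \<open>1\<close>, any number of short jobs on one machine is finished by time
  \<open>1 + \<epsilon>\<close>; putting the long job alone on another machine shows \<open>OPT \<le> 1 + \<epsilon>\<close>.
  In the round-robin profile \<open>i \<mapsto> i mod m\<close> a job has at most as many predecessors on its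
  own machine as on any other, so it is an equilibrium; there the long job starts after
  \<open>K\<close> short jobs, at a time \<open>t \<ge> 1 - (1 - \<epsilon>)^K\<close>, and still needs \<open>1 - \<epsilon> t\<close>,
  so the makespan is about \<open>2\<close>.\<close>

fun seq_finish :: "(nat \<Rightarrow> real \<Rightarrow> real) \<Rightarrow> real \<Rightarrow> nat list \<Rightarrow> real \<Rightarrow> real" where
  "seq_finish p sp [] t = t"
| "seq_finish p sp (k # ks) t = seq_finish p sp ks (t + p k t / sp)"

lemma seq_completion_append:
  "i \<notin> set xs \<Longrightarrow>
   seq_completion p sp (xs @ i # ys) t i = seq_finish p sp xs t + p i (seq_finish p sp xs t) / sp"
  by (induction xs arbitrary: t) (auto simp: Let_def)

lemma seq_finish_uniform:
  "\<forall>k\<in>set xs. p k = q \<Longrightarrow> seq_finish p sp xs t = ((\<lambda>t. t + q t / sp) ^^ length xs) t"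
  by (induction xs arbitrary: t) (simp_all add: funpow_Suc_right del: funpow.simps)

lemma completion_upt_uniform_prefix:
  assumes "i < n" and "\<forall>k<i. p k = q"
  shows "completion p s [0..<n] \<sigma> i =
    (let t = ((\<lambda>t. t + q t / s (\<sigma> i)) ^^ card {k. k < i \<and> \<sigma> k = \<sigma> i}) 0
     in t + p i t / s (\<sigma> i))"
proof -
  let ?P = "\<lambda>k. \<sigma> k = \<sigma> i" and ?xs = "filter (\<lambda>k. \<sigma> k = \<sigma> i) [0..<i]"
  have "[0..<n] = [0..<i] @ [i..<n]"
    using assms(1) upt_add_eq_append[of 0 i "n - i"] by simp
  also have "[i..<n] = i # [Suc i..<n]"
    using assms(1) by (simp add: upt_conv_Cons)
  finally have split: "filter ?P [0..<n] = ?xs @ i # filter ?P [Suc i..<n]"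
    by simp
  have length: "length ?xs = card {k. k < i \<and> ?P k}"
    unfolding length_filter_conv_card by (rule arg_cong[where f = card]) auto
  have uniform: "\<forall>k\<in>set ?xs. p k = q"
    using assms(2) by simp
  have "i \<notin> set ?xs"
    by simp
  show ?thesis
    unfolding completion_def split seq_completion_append[OF \<open>i \<notin> set ?xs\<close>]
      seq_finish_uniform[OF uniform] length Let_def by (rule refl)
qed

lemma mono_job_finish:
  fixes \<alpha> c \<tau> :: real
  assumes "\<alpha> \<le> 1"
  shows "mono (\<lambda>t. t + max (c - \<alpha> * t) \<tau>)"
proof
  fix s t :: real
  assume "s \<le> t"
  then have "s - \<alpha> * s \<le> t - \<alpha> * t"
    using assms mult_right_mono[of \<alpha> 1 "t - s"] by (simp add: algebra_simps)
  then show "s + max (c - \<alpha> * s) \<tau> \<le> t + max (c - \<alpha> * t) \<tau>"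
    using \<open>s \<le> t\<close> by (simp add: max_def)
qed

lemma funpow_job_finish_lower:
  fixes \<alpha> \<tau> :: real
  assumes "\<alpha> \<le> 1"
  shows "1 - (1 - \<alpha>) ^ k \<le> ((\<lambda>t. t + max (\<alpha> - \<alpha> * t) \<tau>) ^^ k) 0"
proof (induction k)
  case 0
  show ?case by simp
next
  case (Suc k)
  let ?t = "((\<lambda>t. t + max (\<alpha> - \<alpha> * t) \<tau>) ^^ k) 0"
  have "1 - (1 - \<alpha>) ^ Suc k = \<alpha> + (1 - \<alpha>) * (1 - (1 - \<alpha>) ^ k)"
    by (simp add: algebra_simps)
  also have "\<dots> \<le> \<alpha> + (1 - \<alpha>) * ?t"
    using Suc assms by (simp add: mult_left_mono)
  also have "\<dots> \<le> ?t + max (\<alpha> - \<alpha> * ?t) \<tau>"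
    by (simp add: algebra_simps)
  finally show ?case by simp
qed

lemma funpow_job_finish_upper:
  fixes \<alpha> \<tau> :: real
  assumes "0 \<le> \<alpha>" "\<alpha> \<le> 1" "0 \<le> \<tau>"
  shows "((\<lambda>t. t + max (\<alpha> - \<alpha> * t) \<tau>) ^^ k) 0 \<le> 1 + k * \<tau>"
proof (induction k)
  case 0
  show ?case by simp
next
  case (Suc k)
  let ?t = "((\<lambda>t. t + max (\<alpha> - \<alpha> * t) \<tau>) ^^ k) 0"
  have "\<alpha> + (1 - \<alpha>) * ?t \<le> \<alpha> + (1 - \<alpha>) * (1 + k * \<tau>)"
    using Suc assms by (simp add: mult_left_mono)
  also have "\<dots> \<le> 1 + Suc k * \<tau>"
    using assms by (simp add: algebra_simps)
  finally have "\<alpha> + (1 - \<alpha>) * ?t \<le> 1 + Suc k * \<tau>" .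
  moreover have "?t + \<tau> \<le> 1 + Suc k * \<tau>"
    using Suc by (simp add: algebra_simps)
  moreover have "?t + max (\<alpha> - \<alpha> * ?t) \<tau> = max (\<alpha> + (1 - \<alpha>) * ?t) (?t + \<tau>)"
    by (simp add: max_def algebra_simps)
  ultimately show ?case by simp
qed

lemma card_residue_ge:
  fixes m :: nat
  assumes "j < m"
  shows "i div m \<le> card {k. k < i \<and> k mod m = j}"
proof -
  have "q * m + j < i" if "q < i div m" for q
  proof -
    have "q * m + j < Suc q * m" using assms by simp
    also have "\<dots> \<le> i div m * m" using that by (intro mult_le_mono1) simp
    also have "\<dots> \<le> i" by simp
    finally show ?thesis .
  qed
  then have "(\<lambda>q. q * m + j) ` {..<i div m} \<subseteq> {k. k < i \<and> k mod m = j}"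
    using assms by auto
  moreover have "inj_on (\<lambda>q. q * m + j) {..<i div m}"
    using assms by (auto simp: inj_on_def)
  ultimately show ?thesis
    using card_inj_on_le[of "\<lambda>q. q * m + j" "{..<i div m}"] by simp
qed

lemma card_residue_le:
  fixes m :: nat
  shows "card {k. k < i \<and> k mod m = i mod m} \<le> i div m"
proof -
  let ?S = "{k. k < i \<and> k mod m = i mod m}"
  have "k div m < i div m" if "k \<in> ?S" for k
  proof (rule ccontr)
    assume "\<not> k div m < i div m"
    then have "i div m * m \<le> k div m * m"
      by (intro mult_le_mono1) simp
    moreover have "k mod m = i mod m"
      using that by simp
    ultimately have "i \<le> k"
      using div_mult_mod_eq[of i m] div_mult_mod_eq[of k m] by linarith
    then show False
      using that by simp
  qed
  moreover have "inj_on (\<lambda>k. k div m) ?S"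
    by (rule inj_onI) (metis (mono_tags, lifting) div_mult_mod_eq mem_Collect_eq)
  ultimately show ?thesis
    using card_inj_on_le[of "\<lambda>k. k div m" ?S "{..<i div m}"] by auto
qed

lemma card_Collect_less_le: "card {k. k < i \<and> P k} \<le> i"
proof -
  have "card {k. k < i \<and> P k} \<le> card {..<i}"
    by (rule card_mono) auto
  then show ?thesis
    by simp
qed

lemma completion_le_makespan:
  "i < n \<Longrightarrow> completion p s prio \<sigma> i \<le> makespan n p s prio \<sigma>"
  unfolding makespan_def by (intro Max_ge) auto

lemma makespan_nonneg: "0 \<le> makespan n p s prio \<sigma>"
  unfolding makespan_def by (intro Max_ge) auto

lemma makespan_le:
  "0 \<le> B \<Longrightarrow> (\<And>i. i < n \<Longrightarrow> completion p s prio \<sigma> i \<le> B) \<Longrightarrow> makespan n p s prio \<sigma> \<le> B"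
  unfolding makespan_def by (intro Max.boundedI) auto

lemma OPT_le_makespan:
  "valid_profile n m \<sigma> \<Longrightarrow> OPT n m p s prio \<le> makespan n p s prio \<sigma>"
  unfolding OPT_def by (rule cInf_lower) (auto simp: bdd_below_def intro: makespan_nonneg)

lemma OPT_ge:
  assumes "0 < m" and "\<And>\<sigma>. valid_profile n m \<sigma> \<Longrightarrow> L \<le> makespan n p s prio \<sigma>"
  shows "L \<le> OPT n m p s prio"
proof -
  have "valid_profile n m (\<lambda>_. 0)"
    using assms(1) by (simp add: valid_profile_def)
  then show ?thesis
    unfolding OPT_def using assms(2) by (intro cInf_greatest) auto
qed

lemma ratio_le_PoA:
  assumes "is_NE n m p s prio \<sigma>" and "0 < OPT n m p s prio"
    and "\<And>\<sigma>'. is_NE n m p s prio \<sigma>' \<Longrightarrow> makespan n p s prio \<sigma>' \<le> B"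
  shows "makespan n p s prio \<sigma> / OPT n m p s prio \<le> PoA n m p s prio"
  unfolding PoA_def
proof (rule cSup_upper)
  show "bdd_above {makespan n p s prio \<sigma> / OPT n m p s prio | \<sigma>. is_NE n m p s prio \<sigma>}"
    using assms(2,3) by (auto simp: bdd_above_def intro!: exI[of _ "B / OPT n m p s prio"] divide_right_mono)
qed (use assms(1) in blast)

lemma SDR_list_upt:
  "(\<And>i j. i \<le> j \<Longrightarrow> j < n \<Longrightarrow> a i \<le> a j) \<Longrightarrow> SDR_list n a [0..<n]"
  unfolding SDR_list_def by (auto simp: sorted_iff_nth_mono)

locale SDR_lower_bound_instance =
  fixes m K :: nat and \<epsilon> \<tau> :: real
  assumes two_le_m: "2 \<le> m"
    and eps_pos: "0 < \<epsilon>" and eps_le_half: "\<epsilon> \<le> 1 / 2"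
    and tau_pos: "0 < \<tau>" and tau_small: "real (Suc (m * K)) * \<tau> \<le> \<epsilon>"
begin

definition N :: nat where "N = m * K"

definition n :: nat where "n = Suc N"

definition b :: "nat \<Rightarrow> real" where "b k = (if k < N then \<epsilon> else 1)"

definition p :: "nat \<Rightarrow> real \<Rightarrow> real" where "p = (\<lambda>i t. max (b i - \<epsilon> * t) \<tau>)"

definition start :: "nat \<Rightarrow> real" where
  "start c = ((\<lambda>t. t + max (\<epsilon> - \<epsilon> * t) \<tau>) ^^ c) 0"

definition finish :: "nat \<Rightarrow> nat \<Rightarrow> real" where
  "finish i c = start c + p i (start c)"

abbreviation C :: "(nat \<Rightarrow> nat) \<Rightarrow> nat \<Rightarrow> real" where
  "C \<sigma> i \<equiv> completion p (\<lambda>_. 1) [0..<n] \<sigma> i"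

abbreviation Cmax :: "(nat \<Rightarrow> nat) \<Rightarrow> real" where
  "Cmax \<sigma> \<equiv> makespan n p (\<lambda>_. 1) [0..<n] \<sigma>"

lemma n_tau_le_eps: "real n * \<tau> \<le> \<epsilon>"
  using tau_small by (simp add: n_def N_def)

lemma tau_le_1: "\<tau> \<le> 1"
proof -
  have "0 \<le> real N * \<tau>"
    using tau_pos by simp
  then show ?thesis
    using n_tau_le_eps eps_le_half by (simp add: n_def distrib_right)
qed

lemma start_mono: "c \<le> c' \<Longrightarrow> start c \<le> start c'"
  unfolding start_def using eps_le_half tau_pos
  by (intro funpow_mono2 mono_job_finish) auto

lemma start_nonneg: "0 \<le> start c"
  using start_mono[of 0 c] by (simp add: start_def)

lemma start_le: "c \<le> n \<Longrightarrow> start c \<le> 1 + \<epsilon>"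
proof -
  assume "c \<le> n"
  have "start c \<le> 1 + c * \<tau>"
    unfolding start_def using eps_pos eps_le_half tau_pos by (intro funpow_job_finish_upper) auto
  also have "c * \<tau> \<le> n * \<tau>"
    using \<open>c \<le> n\<close> tau_pos by (intro mult_right_mono) auto
  finally show ?thesis
    using n_tau_le_eps by simp
qed

lemma completion_eq_finish:
  assumes "i < n"
  shows "C \<sigma> i = finish i (card {k. k < i \<and> \<sigma> k = \<sigma> i})"
proof -
  have short: "\<forall>k<i. p k = (\<lambda>t. max (\<epsilon> - \<epsilon> * t) \<tau>)"
    using assms by (simp add: p_def b_def n_def)
  show ?thesis
    unfolding completion_upt_uniform_prefix[OF assms short] by (simp add: finish_def start_def Let_def)
qed

lemma finish_mono: "c \<le> c' \<Longrightarrow> finish i c \<le> finish i c'"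
  unfolding finish_def p_def using eps_le_half start_mono
  by (auto intro: monoD[OF mono_job_finish])

lemma finish_le: "c \<le> n \<Longrightarrow> finish i c \<le> 2 + \<epsilon>"
proof -
  assume "c \<le> n"
  have "0 \<le> \<epsilon> * start c"
    using eps_pos start_nonneg by simp
  then have "b i - \<epsilon> * start c \<le> 1"
    using eps_le_half by (simp add: b_def)
  then have "p i (start c) \<le> 1"
    using tau_le_1 by (simp add: p_def)
  then show ?thesis
    using start_le[OF \<open>c \<le> n\<close>] by (simp add: finish_def)
qed

lemma finish_short: "i < N \<Longrightarrow> finish i c = start (Suc c)"
  by (simp add: finish_def start_def p_def b_def)

lemma finish_long_ge: "1 + (1 - \<epsilon>) * start c \<le> finish N c"
  by (simp add: finish_def p_def b_def algebra_simps)

lemma finish_long_0: "finish N 0 = 1"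
  using tau_le_1 by (simp add: finish_def start_def p_def b_def)

lemma completion_le: "C \<sigma> i \<le> 2 + \<epsilon>" if "i < n"
proof -
  have "card {k. k < i \<and> \<sigma> k = \<sigma> i} \<le> n"
    using card_Collect_less_le[of i] that by (meson le_trans less_imp_le)
  then show ?thesis
    using completion_eq_finish[OF that] finish_le by simp
qed

lemma makespan_le_2: "Cmax \<sigma> \<le> 2 + \<epsilon>"
  using eps_pos by (intro makespan_le completion_le) auto

lemma N_less_n: "N < n"
  by (simp add: n_def)

lemma makespan_ge_1: "1 \<le> Cmax \<sigma>"
proof -
  let ?c = "card {k. k < N \<and> \<sigma> k = \<sigma> N}"
  have "0 \<le> (1 - \<epsilon>) * start ?c"
    using eps_le_half start_nonneg by simp
  then have "1 \<le> finish N ?c"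
    using finish_long_ge[of ?c] by linarith
  also have "\<dots> = C \<sigma> N"
    using completion_eq_finish[OF N_less_n] by simp
  also have "\<dots> \<le> Cmax \<sigma>"
    using completion_le_makespan[OF N_less_n] .
  finally show ?thesis .
qed

lemma OPT_le: "OPT n m p (\<lambda>_. 1) [0..<n] \<le> 1 + \<epsilon>"
proof -
  define \<sigma> where "\<sigma> = (\<lambda>i. if i = N then 1 else 0 :: nat)"
  have "C \<sigma> i \<le> 1 + \<epsilon>" if "i < n" for i
  proof (cases "i = N")
    case True
    have no_predecessor: "{k. k < N \<and> \<sigma> k = \<sigma> N} = {}"
      by (auto simp: \<sigma>_def)
    have "C \<sigma> i = finish N 0"
      using completion_eq_finish[OF N_less_n, of \<sigma>] unfolding no_predecessor card.empty True .
    also have "\<dots> = 1"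
      by (rule finish_long_0)
    finally show ?thesis
      using eps_pos by simp
  next
    case False
    then have "i < N" using that by (simp add: n_def)
    have "card {k. k < i \<and> \<sigma> k = \<sigma> i} < n"
      using card_Collect_less_le[of i] that by (meson le_less_trans)
    then show ?thesis
      using completion_eq_finish[OF that] finish_short[OF \<open>i < N\<close>] start_le by simp
  qed
  then have "Cmax \<sigma> \<le> 1 + \<epsilon>"
    using eps_pos by (intro makespan_le) auto
  moreover have "valid_profile n m \<sigma>"
    using two_le_m by (simp add: valid_profile_def \<sigma>_def)
  ultimately show ?thesis
    using OPT_le_makespan[of n m \<sigma> p "\<lambda>_. 1" "[0..<n]"] by linarith
qed

lemma OPT_ge_1: "1 \<le> OPT n m p (\<lambda>_. 1) [0..<n]"
  using two_le_m makespan_ge_1 by (intro OPT_ge) auto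

lemma round_robin_NE: "is_NE n m p (\<lambda>_. 1) [0..<n] (\<lambda>i. i mod m)"
  unfolding is_NE_def
proof (intro conjI allI impI)
  show "valid_profile n m (\<lambda>i. i mod m)"
    using two_le_m by (simp add: valid_profile_def)
  fix i j assume "i < n" "j < m"
  have "C (\<lambda>i. i mod m) i = finish i (card {k. k < i \<and> k mod m = i mod m})"
    using completion_eq_finish[OF \<open>i < n\<close>] by simp
  also have "\<dots> \<le> finish i (card {k. k < i \<and> k mod m = j})"
    using card_residue_le card_residue_ge[OF \<open>j < m\<close>] by (blast intro: finish_mono le_trans)
  also have "{k. k < i \<and> k mod m = j} =
      {k. k < i \<and> ((\<lambda>i. i mod m)(i := j)) k = ((\<lambda>i. i mod m)(i := j)) i}"
    by auto
  also have "finish i (card \<dots>) = C ((\<lambda>i. i mod m)(i := j)) i"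
    using completion_eq_finish[OF \<open>i < n\<close>] by simp
  finally show "C (\<lambda>i. i mod m) i \<le> C ((\<lambda>i. i mod m)(i := j)) i" .
qed

lemma round_robin_makespan: "1 + (1 - \<epsilon>) * (1 - (1 - \<epsilon>) ^ K) \<le> Cmax (\<lambda>i. i mod m)"
proof -
  let ?c = "card {k. k < N \<and> k mod m = N mod m}"
  have "K \<le> ?c"
    using card_residue_ge[of "N mod m" m N] two_le_m by (simp add: N_def)
  then have "1 - (1 - \<epsilon>) ^ K \<le> start ?c"
    using funpow_job_finish_lower[of \<epsilon> K \<tau>] start_mono[of K ?c] eps_le_half
    by (simp add: start_def)
  then have "(1 - \<epsilon>) * (1 - (1 - \<epsilon>) ^ K) \<le> (1 - \<epsilon>) * start ?c"
    using eps_le_half by (intro mult_left_mono) auto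
  then have "1 + (1 - \<epsilon>) * (1 - (1 - \<epsilon>) ^ K) \<le> finish N ?c"
    using finish_long_ge[of ?c] by linarith
  also have "\<dots> = C (\<lambda>i. i mod m) N"
    using completion_eq_finish[OF N_less_n] by simp
  also have "\<dots> \<le> Cmax (\<lambda>i. i mod m)"
    using completion_le_makespan[OF N_less_n] .
  finally show ?thesis .
qed

lemma PoA_ge:
  assumes "(1 - \<epsilon>) ^ K \<le> \<epsilon>"
  shows "2 - 4 * \<epsilon> \<le> PoA n m p (\<lambda>_. 1) [0..<n]"
proof -
  let ?opt = "OPT n m p (\<lambda>_. 1) [0..<n]"
  have "(2 - 4 * \<epsilon>) * ?opt \<le> (2 - 4 * \<epsilon>) * (1 + \<epsilon>)"
    using OPT_le eps_le_half by (intro mult_left_mono) auto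
  also have "\<dots> \<le> 1 + (1 - \<epsilon>) * (1 - \<epsilon>)"
    by (simp add: algebra_simps)
  also have "\<dots> \<le> 1 + (1 - \<epsilon>) * (1 - (1 - \<epsilon>) ^ K)"
    using assms eps_le_half by (intro add_left_mono mult_left_mono) auto
  also have "\<dots> \<le> Cmax (\<lambda>i. i mod m)"
    by (rule round_robin_makespan)
  finally have "2 - 4 * \<epsilon> \<le> Cmax (\<lambda>i. i mod m) / ?opt"
    using OPT_ge_1 by (simp add: le_divide_eq)
  also have "\<dots> \<le> PoA n m p (\<lambda>_. 1) [0..<n]"
    using round_robin_NE OPT_ge_1 makespan_le_2 by (intro ratio_le_PoA) auto
  finally show ?thesis .
qed

end

theorem theorem17:
  fixes \<delta> :: real and m :: nat
  assumes "\<delta> > 0" and "m \<ge> 2"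
  shows "\<exists>(n::nat) (a::nat \<Rightarrow> real) (b::nat \<Rightarrow> real) (\<tau>::real) (prio::nat list).
           \<tau> > 0 \<and> (\<forall>i<n. b i \<ge> 0 \<and> 0 \<le> a i \<and> a i \<le> 1) \<and> SDR_list n a prio \<and>
           (\<exists>\<sigma>. is_NE n m (\<lambda>i t. max (b i - a i * t) \<tau>) (\<lambda>j. 1) prio \<sigma>) \<and>
           PoA n m (\<lambda>i t. max (b i - a i * t) \<tau>) (\<lambda>j. 1) prio \<ge> 2 - \<delta>"
proof -
  define \<epsilon> where "\<epsilon> = min (\<delta> / 4) (1 / 2)"
  have "0 < \<epsilon>" "\<epsilon> \<le> 1 / 2" "4 * \<epsilon> \<le> \<delta>"
    using assms(1) by (auto simp: \<epsilon>_def)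
  obtain K where K: "(1 - \<epsilon>) ^ K < \<epsilon>"
    using real_arch_pow_inv[of \<epsilon> "1 - \<epsilon>"] \<open>0 < \<epsilon>\<close> by auto
  define \<tau> where "\<tau> = \<epsilon> / real (Suc (m * K))"
  have "0 < \<tau>"
    unfolding \<tau>_def using \<open>0 < \<epsilon>\<close> by (intro divide_pos_pos) (simp_all only: of_nat_0_less_iff zero_less_Suc)
  interpret I: SDR_lower_bound_instance m K \<epsilon> \<tau>
    using assms(2) \<open>0 < \<epsilon>\<close> \<open>\<epsilon> \<le> 1 / 2\<close> \<open>0 < \<tau>\<close> by unfold_locales (simp_all add: \<tau>_def)
  have PoA: "2 - \<delta> \<le> PoA I.n m I.p (\<lambda>_. 1) [0..<I.n]"
    using I.PoA_ge K \<open>4 * \<epsilon> \<le> \<delta>\<close> by force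
  have SDR: "SDR_list I.n (\<lambda>_. \<epsilon>) [0..<I.n]"
    by (rule SDR_list_upt) simp
  show ?thesis
    by (rule exI[of _ I.n], rule exI[of _ "\<lambda>_. \<epsilon>"], rule exI[of _ I.b], rule exI[of _ \<tau>],
        rule exI[of _ "[0..<I.n]"])
      (use PoA SDR I.round_robin_NE \<open>0 < \<tau>\<close> \<open>0 < \<epsilon>\<close> \<open>\<epsilon> \<le> 1 / 2\<close> in
        \<open>auto simp: I.p_def I.b_def\<close>)
qed

end
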